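(* In the single-block Spice setting, fix an iteration $k$ and let $w^*=(x^*,\lambda^* )\in\Omega$ satisfy $\rho[f(x)-f(x^* )]+(w-w^* )^\top\frac{1}{\eta_k}\Gamma(w^* )\ge 0$ for all $w\in\Omega$. Then $$\|w^*-w^k\|_{H_k}^2\ \ge\ \|w^*-w^{k+1}\|_{H_k}^2+\|w^k-\bar w^k\|_{G_k}^2 .$$
   Context: Single-block Spice setting. Let $\mathcal{X}\subseteq\mathbb{R}^n$ be nonempty closed convex, $f:\mathbb{R}^n\to\mathbb{R}$ convex, $\phi_1,\dots,\phi_p:\mathbb{R}^n\to\mathbb{R}$ convex and continuously differentiable, $\Phi(x)=(\phi_1(x),\dots,\phi_p(x))^\top$, $\mathcal{D}\Phi(x)\in\mathbb{R}^{p\times n}$ its Jacobian. Let $\mathcal{Z}=\mathbb{R}^p_+$, $\Omega=\mathcal{X}\times\mathcal{Z}$, $w=(x,\lambda)$, $\Gamma(w)=(\mathcal{D}\Phi(x)^\top\lambda,\,-\Phi(x))$. For a symmetric matrix $A$, $\|v\|_A^2:=v^\top A v$; the norm of a matrix is the spectral norm; $\mathsf{R}(x):=\|\mathcal{D}\Phi(x)\|^2$. The scaled Lagrangian is $\mathcal{L}(x,\lambda,\rho,\eta)=\rho f(x)+\frac1\eta\lambda^\top\Phi(x)$. Fix $\rho>0$, $\mu>1$, a starting point $w^0=(x^0,\lambda^0)\in\Omega$ and positive numbers $\eta_0,\eta_1,\dots$. Given $w^k=(x^k,\lambda^k)\in\Omega$, iteration $k$ is: $r_k=\frac{1}{\eta_k}\sqrt{\mathsf{R}(x^k)}$;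 $\bar x^k=\arg\min_{x\in\mathcal{X}}\{\mathcal{L}(x,\lambda^k,\rho,\eta_k)+\frac{r_k}{2}\|x-x^k\|^2\}$; $s_k=\frac{\mu\,\mathsf{R}(\bar x^k)}{\eta_k\sqrt{\mathsf{R}(x^k)}}$; $\bar\lambda^k=\arg\max_{\lambda\in\mathcal{Z}}\{\mathcal{L}(\bar x^k,\lambda,\rho,\eta_k)-\frac{s_k}{2}\|\lambda-\lambda^k\|^2\}$ (equivalently $\bar\lambda^k=\max\{\lambda^k+\frac{1}{\eta_k s_k}\Phi(\bar x^k),0\}$ componentwise); $\bar w^k=(\bar x^k,\bar\lambda^k)$; and $w^{k+1}=w^k-M_k(w^k-\bar w^k)$ where $M_k=\begin{pmatrix}I_n & -\frac{1}{\eta_k r_k}\mathcal{D}\Phi(\bar x^k)^\top\\ 0 & I_p\end{pmatrix}$. It is assumed throughout that $\mathsf{R}(x^k)>0$ and $\mathsf{R}(\bar x^k)>0$ for all $k$. Define $Q_k=\begin{pmatrix} r_kI_n & -\frac{1}{\eta_k}\mathcal{D}\Phi(\bar x^k)^\top\\ 0 & s_kI_p\end{pmatrix}$, $H_k=\begin{pmatrix} r_kI_n&0\\0&s_kI_p\end{pmatrix}$, $G_k=\begin{pmatrix} r_kI_n&0\\0&s_kI_p-\frac{1}{\eta_k^2r_k}\mathcal{D}\Phi(\bar x^k)\mathcal{D}\Phi(\bar x^k)^\top\end{pmatrix}$. *)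

theory Defs
  imports "HOL-Analysis.Analysis"
begin

definition spec_norm :: "real^'n^'m \<Rightarrow> real" where
  "spec_norm A = onorm (\<lambda>v. A *v v)"

definition sR :: "(real^'n \<Rightarrow> real^'n^'p) \<Rightarrow> real^'n \<Rightarrow> real" where
  "sR DPhi x = (spec_norm (DPhi x))\<^sup>2"

definition scaledL :: "(real^'n \<Rightarrow> real) \<Rightarrow> (real^'n \<Rightarrow> real^'p) \<Rightarrow> real^'n \<Rightarrow> real^'p \<Rightarrow> real \<Rightarrow> real \<Rightarrow> real" where
  "scaledL f Phi x lam rho eta = rho * f x + (1/eta) * (lam \<bullet> Phi x)"

definition orthant :: "(real^'p) set" where
  "orthant = {l. \<forall>i. 0 \<le> l $ i}"

end

theory Submission
  imports Defs
begin

text \<open>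
  The two proximal subproblems give first-order optimality conditions at the predictor
  \<open>wb = (xb, lamb)\<close>. Testing them at the solution \<open>ws = (xs, lams)\<close>, and the variational
  inequality of \<open>ws\<close> at \<open>wb\<close>, the \<open>f\<close>-terms cancel and the \<open>\<Gamma>\<close>-terms combine into
  \<open>(wb - ws)\<^sup>T (\<Gamma> wb - \<Gamma> ws)\<close>, which is nonnegative because the \<open>\<phi>\<^sub>i\<close> are convex and the
  multipliers nonnegative. What is left is \<open>(wb - ws)\<^sup>T Q\<^sub>k (wk - wb) \<ge> 0\<close>, and the correction
  step is designed so that twice this quantity equals
  \<open>\<parallel>ws - wk\<parallel>\<^sup>2\<^sub>H - \<parallel>ws - wk\<^sub>+\<^sub>1\<parallel>\<^sup>2\<^sub>H - \<parallel>wk - wb\<parallel>\<^sup>2\<^sub>G\<close>.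
\<close>

lemma inner_matrix_vector_transpose:
  fixes D :: "real^'n^'m"
  shows "(D *v x) \<bullet> y = x \<bullet> (transpose D *v y)"
  by (metis dot_lmul_matrix vector_transpose_matrix)

lemma convex_orthant: "convex orthant"
  unfolding orthant_def convex_def by (auto intro!: add_nonneg_nonneg mult_nonneg_nonneg)

lemma directional_derivative_le:
  fixes h :: "'a::real_normed_vector \<Rightarrow> real"
  assumes h: "(h has_derivative h') (at x)"
    and secant: "\<And>t. 0 < t \<Longrightarrow> t < 1 \<Longrightarrow> h (x + t *\<^sub>R (y - x)) - h x \<le> t * c"
  shows "h' (y - x) \<le> c"
proof -
  let ?g = "\<lambda>t::real. x + t *\<^sub>R (y - x)"
  have "((h \<circ> ?g) has_derivative (h' \<circ> (\<lambda>t. t *\<^sub>R (y - x)))) (at 0)"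
    by (rule diff_chain_at) (use h in \<open>auto intro!: derivative_eq_intros\<close>)
  moreover have "h' \<circ> (\<lambda>t. t *\<^sub>R (y - x)) = (\<lambda>t. h' (y - x) * t)"
    using has_derivative_linear[OF h] by (auto simp: linear_scale mult.commute)
  ultimately have "((h \<circ> ?g) has_field_derivative h' (y - x)) (at 0)"
    by (simp add: has_field_derivative_def)
  then have "((\<lambda>t. (h (?g t) - h x) / t) \<longlongrightarrow> h' (y - x)) (at_right 0)"
    by (auto simp: has_field_derivative_iff filterlim_at_split)
  moreover have "eventually (\<lambda>t. (h (?g t) - h x) / t \<le> c) (at_right (0::real))"
    unfolding eventually_at_right_field
    by (rule exI[of _ 1]) (auto simp: divide_simps secant mult.commute intro: secant[simplified mult.commute])
  ultimately show ?thesis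
    by (intro tendsto_le[OF _ tendsto_const]) auto
qed

lemma convex_on_gradient_inequality:
  fixes h :: "'a::real_normed_vector \<Rightarrow> real"
  assumes "convex_on UNIV h" "(h has_derivative h') (at x)"
  shows "h x + h' (y - x) \<le> h y"
proof -
  have "h' (y - x) \<le> h y - h x"
  proof (rule directional_derivative_le[OF assms(2)])
    fix t :: real assume "0 < t" "t < 1"
    then have "h ((1 - t) *\<^sub>R x + t *\<^sub>R y) \<le> (1 - t) * h x + t * h y"
      using convex_onD[OF assms(1)] by simp
    moreover have "x + t *\<^sub>R (y - x) = (1 - t) *\<^sub>R x + t *\<^sub>R y"
      by (simp add: algebra_simps)
    ultimately show "h (x + t *\<^sub>R (y - x)) - h x \<le> t * (h y - h x)"
      by (simp add: algebra_simps)
  qed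
  then show ?thesis by simp
qed

lemma convex_minimizer_first_order:
  fixes F g :: "'a::real_normed_vector \<Rightarrow> real"
  assumes C: "convex C" "x \<in> C" "y \<in> C"
    and F: "convex_on C F"
    and g: "(g has_derivative g') (at x)"
    and min: "\<And>z. z \<in> C \<Longrightarrow> F x + g x \<le> F z + g z"
  shows "0 \<le> F y - F x + g' (y - x)"
proof -
  have "(\<lambda>v. - g' v) (y - x) \<le> F y - F x"
  proof (rule directional_derivative_le)
    show "((\<lambda>z. - g z) has_derivative (\<lambda>v. - g' v)) (at x)"
      using g by (rule has_derivative_minus)
  next
    fix t :: real assume t: "0 < t" "t < 1"
    have z: "x + t *\<^sub>R (y - x) = (1 - t) *\<^sub>R x + t *\<^sub>R y"
      by (simp add: algebra_simps)
    have "(1 - t) *\<^sub>R x + t *\<^sub>R y \<in> C"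
      using C t by (simp add: convex_def)
    moreover have "F ((1 - t) *\<^sub>R x + t *\<^sub>R y) \<le> (1 - t) * F x + t * F y"
      using convex_onD[OF F, of t x y] C t by simp
    ultimately show "- g (x + t *\<^sub>R (y - x)) - - g x \<le> t * (F y - F x)"
      unfolding z using min by (fastforce simp: algebra_simps)
  qed
  then show ?thesis by simp
qed

lemma orthant_inner_linearization_nonneg:
  fixes Phi :: "real^'n \<Rightarrow> real^'p" and DPhi :: "real^'n \<Rightarrow> real^'n^'p"
  assumes Phi_cvx: "\<And>i. convex_on UNIV (\<lambda>x. Phi x $ i)"
    and Phi_deriv: "\<And>x. (Phi has_derivative (\<lambda>v. DPhi x *v v)) (at x)"
    and lam: "lam \<in> orthant"
  shows "0 \<le> lam \<bullet> (Phi y - Phi x - DPhi x *v (y - x))"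
proof -
  have "0 \<le> (Phi y - Phi x - DPhi x *v (y - x)) $ i" for i
    using convex_on_gradient_inequality[OF Phi_cvx[of i]
        bounded_linear.has_derivative[OF bounded_linear_vec_nth Phi_deriv[of x]], where y=y]
    by simp
  with lam show ?thesis
    unfolding orthant_def inner_vec_def by (auto intro!: sum_nonneg)
qed

lemma jacobian_pairing_monotone:
  fixes Phi :: "real^'n \<Rightarrow> real^'p" and DPhi :: "real^'n \<Rightarrow> real^'n^'p"
  assumes Phi_cvx: "\<And>i. convex_on UNIV (\<lambda>x. Phi x $ i)"
    and Phi_deriv: "\<And>x. (Phi has_derivative (\<lambda>v. DPhi x *v v)) (at x)"
    and "lam \<in> orthant" "lam' \<in> orthant"
  shows "0 \<le> (x - x') \<bullet> (transpose (DPhi x) *v lam - transpose (DPhi x') *v lam')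
             + (lam - lam') \<bullet> (Phi x' - Phi x)"
proof -
  have "0 \<le> lam \<bullet> (Phi x' - Phi x - DPhi x *v (x' - x))"
       "0 \<le> lam' \<bullet> (Phi x - Phi x' - DPhi x' *v (x - x'))"
    using orthant_inner_linearization_nonneg[OF Phi_cvx Phi_deriv] assms(3,4) by auto
  then show ?thesis
    by (simp add: inner_diff_left inner_diff_right inner_commute
        inner_matrix_vector_transpose[symmetric] matrix_vector_mult_diff_distrib
        del: transpose_matrix_vector)
qed

lemma scaledL_prox_min_first_order:
  fixes X :: "(real^'n) set" and Phi :: "real^'n \<Rightarrow> real^'p"
  assumes X: "convex X" "xb \<in> X" "x \<in> X"
    and f_cvx: "convex_on UNIV f" and rho: "rho \<ge> 0"
    and Phi_deriv: "(Phi has_derivative (\<lambda>v. D *v v)) (at xb)"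
    and min: "\<And>z. z \<in> X \<Longrightarrow>
       scaledL f Phi xb lam rho eta + r / 2 * (norm (xb - xk))\<^sup>2
       \<le> scaledL f Phi z lam rho eta + r / 2 * (norm (z - xk))\<^sup>2"
  shows "0 \<le> rho * (f x - f xb) + (1/eta) * (lam \<bullet> (D *v (x - xb))) + r * ((xb - xk) \<bullet> (x - xb))"
proof -
  define k where "k = 1/eta"
  have "0 \<le> rho * f x - rho * f xb
      + (k * (lam \<bullet> (D *v (x - xb))) + r/2 * ((x - xb) \<bullet> (xb - xk) + (xb - xk) \<bullet> (x - xb)))"
  proof (rule convex_minimizer_first_order[OF X, where g = "\<lambda>z. k * (lam \<bullet> Phi z) + r/2 * ((z - xk) \<bullet> (z - xk))"])
    show "convex_on X (\<lambda>z. rho * f z)"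
      using convex_on_subset[OF convex_on_cmul[OF rho f_cvx]] X(1) by blast
    show "((\<lambda>z. k * (lam \<bullet> Phi z) + r/2 * ((z - xk) \<bullet> (z - xk))) has_derivative
        (\<lambda>v. k * (lam \<bullet> (D *v v)) + r/2 * (v \<bullet> (xb - xk) + (xb - xk) \<bullet> v))) (at xb)"
      by (auto intro!: derivative_eq_intros Phi_deriv)
  qed (use min in \<open>auto simp: scaledL_def k_def power2_norm_eq_inner algebra_simps\<close>)
  then show ?thesis by (simp add: k_def inner_commute algebra_simps)
qed

lemma scaledL_prox_max_first_order:
  fixes Phi :: "real^'n \<Rightarrow> real^'p"
  assumes lam: "lamb \<in> orthant" "lam \<in> orthant"
    and max: "\<And>l. l \<in> orthant \<Longrightarrow>
       scaledL f Phi x l rho eta - s / 2 * (norm (l - lamk))\<^sup>2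
       \<le> scaledL f Phi x lamb rho eta - s / 2 * (norm (lamb - lamk))\<^sup>2"
  shows "0 \<le> s * ((lamb - lamk) \<bullet> (lam - lamb)) - (1/eta) * ((lam - lamb) \<bullet> Phi x)"
proof -
  define k where "k = 1/eta"
  have "0 \<le> 0 - 0 + (- (k * ((lam - lamb) \<bullet> Phi x))
      + s/2 * ((lam - lamb) \<bullet> (lamb - lamk) + (lamb - lamk) \<bullet> (lam - lamb)))"
  proof (rule convex_minimizer_first_order[OF convex_orthant lam, where F = "\<lambda>_. 0"
        and g = "\<lambda>l. - (k * (l \<bullet> Phi x)) + s/2 * ((l - lamk) \<bullet> (l - lamk))"])
    show "convex_on orthant (\<lambda>_. 0::real)"
      by (simp add: convex_on_const convex_orthant)
    show "((\<lambda>l. - (k * (l \<bullet> Phi x)) + s/2 * ((l - lamk) \<bullet> (l - lamk))) has_derivative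
        (\<lambda>v. - (k * (v \<bullet> Phi x)) + s/2 * (v \<bullet> (lamb - lamk) + (lamb - lamk) \<bullet> v))) (at lamb)"
      by (auto intro!: derivative_eq_intros)
  qed (use max in \<open>auto simp: scaledL_def k_def power2_norm_eq_inner algebra_simps\<close>)
  then show ?thesis by (simp add: k_def inner_commute algebra_simps)
qed

lemma spice_three_point_identity:
  fixes D :: "real^'n^'p" and xk xb xs xk1 :: "real^'n" and lamk lamb lams :: "real^'p"
  assumes "r \<noteq> 0" "eta \<noteq> 0"
    and xk1: "xk1 = xk - ((xk - xb) - (1 / (eta * r)) *\<^sub>R (transpose D *v (lamk - lamb)))"
    and G: "G = s *\<^sub>R mat 1 - (1 / (eta\<^sup>2 * r)) *\<^sub>R (D ** transpose D)"
  shows "r * ((xs - xk) \<bullet> (xs - xk)) + s * ((lams - lamk) \<bullet> (lams - lamk))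
      - (r * ((xs - xk1) \<bullet> (xs - xk1)) + s * ((lams - lamb) \<bullet> (lams - lamb))
         + (r * ((xk - xb) \<bullet> (xk - xb)) + (lamk - lamb) \<bullet> (G *v (lamk - lamb))))
    = 2 * (r * ((xb - xs) \<bullet> (xk - xb)) - (1/eta) * ((xb - xs) \<bullet> (transpose D *v (lamk - lamb)))
         + s * ((lamb - lams) \<bullet> (lamk - lamb)))"
proof -
  define q a b m u c where "q = xs - xb" and "a = xk - xb" and "b = lamk - lamb"
    and "m = lams - lamb" and "u = transpose D *v b" and "c = 1 / (eta * r)"
  have sq_k: "(xs - xk) \<bullet> (xs - xk) = q \<bullet> q - 2 * (q \<bullet> a) + a \<bullet> a"
    "(lams - lamk) \<bullet> (lams - lamk) = m \<bullet> m - 2 * (m \<bullet> b) + b \<bullet> b"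
    unfolding q_def a_def b_def m_def
    by (simp_all add: inner_diff_left inner_diff_right inner_commute)
  have sq_k1: "(xs - xk1) \<bullet> (xs - xk1) = q \<bullet> q - 2 * c * (q \<bullet> u) + c * c * (u \<bullet> u)"
  proof -
    have "xs - xk1 = q - c *\<^sub>R u"
      unfolding xk1 q_def c_def u_def b_def by (simp add: algebra_simps)
    then show ?thesis
      by (simp only:) (simp add: inner_diff_left inner_diff_right inner_commute algebra_simps)
  qed
  have G_form: "b \<bullet> (G *v b) = s * (b \<bullet> b) - (1 / (eta\<^sup>2 * r)) * (u \<bullet> u)"
  proof -
    have "b \<bullet> (D *v u) = u \<bullet> u"
      unfolding u_def by (metis inner_matrix_vector_transpose inner_commute)
    then show ?thesis
      unfolding G u_def
      by (simp add: matrix_vector_mult_diff_rdistrib inner_diff_right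
          matrix_vector_mul_assoc[symmetric] scaleR_matrix_vector_assoc[symmetric]
          del: transpose_matrix_vector)
  qed
  have cross: "(xb - xs) \<bullet> a = - (q \<bullet> a)" "(xb - xs) \<bullet> u = - (q \<bullet> u)"
      "(lamb - lams) \<bullet> b = - (m \<bullet> b)"
    unfolding q_def a_def b_def m_def by (metis inner_minus_left minus_diff_eq)+
  have "r * c = 1/eta" "r * c * c = 1 / (eta\<^sup>2 * r)"
    unfolding c_def using assms(1,2) by (simp_all add: field_simps power2_eq_square)
  then have rc: "r * (2 * c * (q \<bullet> u)) = 2 * (1/eta) * (q \<bullet> u)"
      "r * (c * c * (u \<bullet> u)) = (1 / (eta\<^sup>2 * r)) * (u \<bullet> u)"
    by (metis mult.assoc mult.left_commute)+
  show ?thesis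
    unfolding sq_k sq_k1 a_def[symmetric] b_def[symmetric] u_def[symmetric] G_form cross m_def[symmetric]
    using rc unfolding ring_distribs mult_minus_right by linarith
qed

theorem theorem3p1:
  fixes X :: "(real^'n) set" and f :: "real^'n \<Rightarrow> real"
    and Phi :: "real^'n \<Rightarrow> real^'p" and DPhi :: "real^'n \<Rightarrow> real^'n^'p"
    and rho mu eta :: real
    and xk xb xs :: "real^'n" and lamk lamb lams :: "real^'p"
  assumes X: "closed X" "convex X" "X \<noteq> {}"
    and f_cvx: "convex_on UNIV f"
    and Phi_cvx: "\<And>i. convex_on UNIV (\<lambda>x. Phi x $ i)"
    and Phi_deriv: "\<And>x. (Phi has_derivative (\<lambda>v. DPhi x *v v)) (at x)"
    and DPhi_cont: "continuous_on UNIV DPhi"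
    and rho: "rho > 0" and mu: "mu > 1" and eta: "eta > 0"
    and wk: "xk \<in> X" "lamk \<in> orthant"
    and Rk_pos: "sR DPhi xk > 0" and Rb_pos: "sR DPhi xb > 0"
    and xb_min: "xb \<in> X"
      "\<And>x. x \<in> X \<Longrightarrow>
         scaledL f Phi xb lamk rho eta + ((1/eta) * sqrt (sR DPhi xk)) / 2 * (norm (xb - xk))\<^sup>2
         \<le> scaledL f Phi x lamk rho eta + ((1/eta) * sqrt (sR DPhi xk)) / 2 * (norm (x - xk))\<^sup>2"
    and lamb_max: "lamb \<in> orthant"
      "\<And>lam. lam \<in> orthant \<Longrightarrow>
         scaledL f Phi xb lam rho eta
           - (mu * sR DPhi xb / (eta * sqrt (sR DPhi xk))) / 2 * (norm (lam - lamk))\<^sup>2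
         \<le> scaledL f Phi xb lamb rho eta
           - (mu * sR DPhi xb / (eta * sqrt (sR DPhi xk))) / 2 * (norm (lamb - lamk))\<^sup>2"
    and ws: "xs \<in> X" "lams \<in> orthant"
    and VI: "\<And>x lam. x \<in> X \<Longrightarrow> lam \<in> orthant \<Longrightarrow>
         rho * (f x - f xs) + (x - xs) \<bullet> ((1/eta) *\<^sub>R (transpose (DPhi xs) *v lams))
           + (lam - lams) \<bullet> ((1/eta) *\<^sub>R (- Phi xs)) \<ge> 0"
  shows
    "let r = (1/eta) * sqrt (sR DPhi xk);
         s = mu * sR DPhi xb / (eta * sqrt (sR DPhi xk));
         D = DPhi xb;
         xk1 = xk - ((xk - xb) - (1 / (eta * r)) *\<^sub>R (transpose D *v (lamk - lamb)));
         lamk1 = lamk - (lamk - lamb);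
         Gblk = s *\<^sub>R mat 1 - (1 / (eta\<^sup>2 * r)) *\<^sub>R (D ** transpose D)
     in r * ((xs - xk) \<bullet> (xs - xk)) + s * ((lams - lamk) \<bullet> (lams - lamk))
        \<ge> r * ((xs - xk1) \<bullet> (xs - xk1)) + s * ((lams - lamk1) \<bullet> (lams - lamk1))
          + (r * ((xk - xb) \<bullet> (xk - xb)) + (lamk - lamb) \<bullet> (Gblk *v (lamk - lamb)))"
proof -
  define r where "r = (1/eta) * sqrt (sR DPhi xk)"
  define s where "s = mu * sR DPhi xb / (eta * sqrt (sR DPhi xk))"
  define D where "D = DPhi xb"
  have r: "r > 0" unfolding r_def using Rk_pos eta by simp
  have x_step: "0 \<le> rho * (f xs - f xb) + (1/eta) * (lamk \<bullet> (D *v (xs - xb)))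
      + r * ((xb - xk) \<bullet> (xs - xb))"
    using scaledL_prox_min_first_order[OF X(2) xb_min(1) ws(1) f_cvx less_imp_le[OF rho]
        Phi_deriv xb_min(2)]
    unfolding r_def D_def .
  have lam_step: "0 \<le> s * ((lamb - lamk) \<bullet> (lams - lamb)) - (1/eta) * ((lams - lamb) \<bullet> Phi xb)"
    using scaledL_prox_max_first_order[OF lamb_max(1) ws(2) lamb_max(2)] unfolding s_def .
  have mono: "0 \<le> (xb - xs) \<bullet> (transpose D *v lamb - transpose (DPhi xs) *v lams)
      + (lamb - lams) \<bullet> (Phi xs - Phi xb)"
    unfolding D_def by (rule jacobian_pairing_monotone[OF Phi_cvx Phi_deriv lamb_max(1) ws(2)])
  \<comment> \<open>the sum of the four inequalities above, the last one weighted by \<open>1/eta\<close>\<close>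
  have "0 \<le> r * ((xb - xs) \<bullet> (xk - xb)) - (1/eta) * ((xb - xs) \<bullet> (transpose D *v (lamk - lamb)))
      + s * ((lamb - lams) \<bullet> (lamk - lamb))"
    using x_step lam_step VI[OF xb_min(1) lamb_max(1)] mult_nonneg_nonneg[OF _ mono, of "1/eta"] eta
    by (simp add: inner_commute[of lamk] inner_matrix_vector_transpose inner_diff_left inner_diff_right
        matrix_vector_mult_diff_distrib algebra_simps add_divide_distrib diff_divide_distrib
        del: transpose_matrix_vector) (simp add: inner_commute)
  moreover note spice_three_point_identity[where r = r and eta = eta and D = D and s = s
      and xs = xs and xk = xk and xb = xb and lams = lams and lamk = lamk and lamb = lamb,
      OF _ _ refl refl]
  ultimately show ?thesis
    using r eta unfolding Let_def r_def[symmetric] s_def[symmetric] D_def[symmetric] by simp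
qed

end
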